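(* Let $\varphi$ be a primitive morphism on a finite alphabet $A$, let $\mathcal{L}_\varphi$ be the language generated by $\varphi$, and let ${\rm S}:\mathcal{L}_\varphi\to\mathbb{Z}\times\mathbb{Z}$ be a homomorphism. If the drift $\Delta_\varphi({\rm S})=\sum_{a\in A}\mu_\varphi(a){\rm S}(a)$ is not $(0,0)$, then $(\mathbb{Z}\times\mathbb{Z})\setminus{\rm S}(\mathcal{L}_\varphi)$ is infinite.
   Context: A morphism $\varphi:A^*\to A^*$ is primitive if there is $k\ge1$ such that for all letters $a,b\in A$ the letter $b$ occurs in $\varphi^k(a)$. The language $\mathcal{L}_\varphi$ generated by $\varphi$ is the set of all nonempty finite words occurring as factors of $\varphi^n(a)$ for some $n\ge0$ and some $a\in A$. For a primitive morphism, $\mu_\varphi(a)$ denotes the frequency of the letter $a$ (under the unique invariant probability measure of the associated substitution subshift); equivalently, $(\mu_\varphi(a))_{a\in A}$ is the positive Perron–Frobenius eigenvector, normalized to have sum $1$, of the incidence matrix $M$ with $M_{a,b}$ = number of occurrences of $a$ in $\varphi(b)$. A homomorphism ${\rm S}:\mathcal{L}_\varphi\to\mathbb{Z}\times\mathbb{Z}$ is a map with ${\rm S}(w_1\cdots w_n)={\rm S}(w_1)+\cdots+{\rm S}(w_n)$, determined by the vectors ${\rm S}(a)$, $a\in A$. *)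

theory Defs
  imports Complex_Main "HOL-Library.Sublist"
begin

definition morph_app :: "('a \<Rightarrow> 'a list) \<Rightarrow> 'a list \<Rightarrow> 'a list" where
  "morph_app \<phi> w = concat (map \<phi> w)"

definition morph_pow :: "('a \<Rightarrow> 'a list) \<Rightarrow> nat \<Rightarrow> 'a list \<Rightarrow> 'a list" where
  "morph_pow \<phi> n = (morph_app \<phi>) ^^ n"

definition primitive :: "('a \<Rightarrow> 'a list) \<Rightarrow> bool" where
  "primitive \<phi> \<longleftrightarrow> (\<exists>k\<ge>1. \<forall>a b. b \<in> set (morph_pow \<phi> k [a]))"

definition lang :: "('a \<Rightarrow> 'a list) \<Rightarrow> 'a list set" where
  "lang \<phi> = {w. w \<noteq> [] \<and> (\<exists>n a. sublist w (morph_pow \<phi> n [a]))}"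

definition incidence :: "('a \<Rightarrow> 'a list) \<Rightarrow> 'a \<Rightarrow> 'a \<Rightarrow> nat" where
  "incidence \<phi> a b = count_list (\<phi> b) a"

text \<open>Letter frequencies: the positive Perron-Frobenius eigenvector of the
  incidence matrix, normalised to sum 1.\<close>
definition is_PF_freq :: "('a::finite \<Rightarrow> 'a list) \<Rightarrow> ('a \<Rightarrow> real) \<Rightarrow> bool" where
  "is_PF_freq \<phi> \<mu> \<longleftrightarrow> (\<forall>a. \<mu> a > 0) \<and> (\<Sum>a\<in>UNIV. \<mu> a) = 1 \<and>
     (\<exists>r. \<forall>a. (\<Sum>b\<in>UNIV. real (incidence \<phi> a b) * \<mu> b) = r * \<mu> a)"

definition freq :: "('a::finite \<Rightarrow> 'a list) \<Rightarrow> 'a \<Rightarrow> real" where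
  "freq \<phi> = (THE \<mu>. is_PF_freq \<phi> \<mu>)"

definition hom_word :: "('a \<Rightarrow> int \<times> int) \<Rightarrow> 'a list \<Rightarrow> int \<times> int" where
  "hom_word S w = (sum_list (map (\<lambda>x. fst (S x)) w), sum_list (map (\<lambda>x. snd (S x)) w))"

definition drift :: "('a::finite \<Rightarrow> 'a list) \<Rightarrow> ('a \<Rightarrow> int \<times> int) \<Rightarrow> real \<times> real" where
  "drift \<phi> S = ((\<Sum>a\<in>UNIV. freq \<phi> a * real_of_int (fst (S a))),
                (\<Sum>a\<in>UNIV. freq \<phi> a * real_of_int (snd (S a))))"

end

theory Submission
  imports Defs "HOL-Analysis.Analysis"
begin

text \<open>Write \<open>\<Delta> = (d\<^sub>1, d\<^sub>2)\<close> for the drift and weigh each letter by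
  \<open>\<beta>(a) = d\<^sub>1 S\<^sub>1(a) + d\<^sub>2 S\<^sub>2(a)\<close>, so that \<open>\<Sum>\<^sub>a \<beta>(a) \<mu>(a) = |\<Delta>|\<^sup>2 > 0\<close>.
  Some power \<open>\<phi>\<^sup>k\<close> has a positive incidence matrix with Perron vector \<open>\<mu>\<close>
  (Brouwer gives existence, a comparison argument uniqueness). Iterating it contracts the
  letter-count vectors of \<open>\<phi>\<^sup>j(b)\<close> towards the ray of \<open>\<mu>\<close>, so the \<open>\<beta>\<close>-weight of
  \<open>\<phi>\<^sup>j(b)\<close> is nonnegative for all large \<open>j\<close>. Every factor of an iterate desubstitutes
  into boundedly many images \<open>\<phi>\<^sup>j(b)\<close> at each level, so \<open>\<beta>\<close>-weights are bounded
  below on \<open>\<L>\<^sub>\<phi>\<close>. The lattice points \<open>n e\<close> with \<open>d\<^sub>1 e\<^sub>1 + d\<^sub>2 e\<^sub>2 < 0\<close> have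
  weight tending to \<open>-\<infinity>\<close>, hence all but finitely many of them avoid \<open>S(\<L>\<^sub>\<phi>)\<close>.\<close>

section \<open>Iterating a morphism\<close>

lemma morph_app_Nil [simp]: "morph_app \<phi> [] = []"
  by (simp add: morph_app_def)

lemma morph_app_singleton [simp]: "morph_app \<phi> [x] = \<phi> x"
  by (simp add: morph_app_def)

lemma morph_app_append [simp]: "morph_app \<phi> (u @ v) = morph_app \<phi> u @ morph_app \<phi> v"
  by (simp add: morph_app_def)

lemma morph_app_Cons: "morph_app \<phi> (x # v) = \<phi> x @ morph_app \<phi> v"
  by (simp add: morph_app_def)

lemma morph_pow_0 [simp]: "morph_pow \<phi> 0 w = w"
  by (simp add: morph_pow_def)

lemma morph_pow_Suc: "morph_pow \<phi> (Suc n) w = morph_app \<phi> (morph_pow \<phi> n w)"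
  by (simp add: morph_pow_def)

lemma morph_pow_Suc': "morph_pow \<phi> (Suc n) w = morph_pow \<phi> n (morph_app \<phi> w)"
  by (simp add: morph_pow_def funpow_swap1)

lemma morph_pow_add: "morph_pow \<phi> (m + n) w = morph_pow \<phi> m (morph_pow \<phi> n w)"
  by (simp add: morph_pow_def funpow_add)

lemma morph_pow_Nil [simp]: "morph_pow \<phi> n [] = []"
  by (induction n) (simp_all add: morph_pow_Suc)

lemma morph_pow_append [simp]: "morph_pow \<phi> n (u @ v) = morph_pow \<phi> n u @ morph_pow \<phi> n v"
  by (induction n arbitrary: u v) (simp_all add: morph_pow_Suc)

lemma morph_pow_Cons: "morph_pow \<phi> n (x # u) = morph_pow \<phi> n [x] @ morph_pow \<phi> n u"
  using morph_pow_append[of \<phi> n "[x]" u] by simp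

lemma primitive_nonerasing:
  assumes "primitive \<phi>"
  shows "\<phi> c \<noteq> []"
proof
  assume erased: "\<phi> c = []"
  obtain k where "k \<ge> 1" and full: "\<And>a b. b \<in> set (morph_pow \<phi> k [a])"
    using assms unfolding primitive_def by blast
  then obtain k' where "k = Suc k'" by (cases k) auto
  then have "morph_pow \<phi> k [c] = []" using erased by (simp add: morph_pow_Suc')
  then show False using full[of c c] by simp
qed

lemma morph_pow_nonempty:
  assumes "\<And>c. \<phi> c \<noteq> []" and "w \<noteq> []"
  shows "morph_pow \<phi> n w \<noteq> []"
proof (induction n)
  case (Suc n)
  then obtain x v where "morph_pow \<phi> n w = x # v" by (cases "morph_pow \<phi> n w") auto
  then show ?case using assms(1) by (simp add: morph_pow_Suc morph_app_Cons)
qed (use assms(2) in simp)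

definition image_length_bound :: "('a::finite \<Rightarrow> 'a list) \<Rightarrow> nat" where
  "image_length_bound \<phi> = (\<Sum>a\<in>UNIV. length (\<phi> a))"

lemma length_le_image_length_bound: "length (\<phi> a) \<le> image_length_bound \<phi>"
  unfolding image_length_bound_def by (rule member_le_sum) auto

lemma prefix_morph_app_decomp:
  assumes "prefix r (morph_app \<phi> v)"
  obtains u p where "r = morph_app \<phi> u @ p" "prefix u v" "length p \<le> image_length_bound \<phi>"
  using assms
proof (induction v arbitrary: r thesis)
  case (Cons x v)
  then consider "prefix r (\<phi> x)" | r' where "r = \<phi> x @ r'" "prefix r' (morph_app \<phi> v)"
    by (auto simp: morph_app_Cons prefix_append)
  then show ?case
  proof cases
    case 1
    then have "length r \<le> image_length_bound \<phi>"
      using length_le_image_length_bound[of \<phi> x] prefix_length_le order_trans by blast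
    then show ?thesis using Cons.prems(1)[of "[]" r] by simp
  next
    case 2
    obtain u p where "r' = morph_app \<phi> u @ p" "prefix u v" "length p \<le> image_length_bound \<phi>"
      using Cons.IH[OF _ 2(2)] by blast
    then show ?thesis using Cons.prems(1)[of "x # u" p] 2(1) by (simp add: morph_app_Cons)
  qed
qed simp

lemma sublist_morph_app_decomp:
  assumes "sublist w (morph_app \<phi> v)"
  obtains s u p where "w = s @ morph_app \<phi> u @ p" "sublist u v"
    "length s \<le> image_length_bound \<phi>" "length p \<le> image_length_bound \<phi>"
  using assms
proof (induction v arbitrary: w thesis)
  case Nil
  from Nil.prems(2) have "w = []" by simp
  then show ?case using Nil.prems(1)[of "[]" "[]" "[]"] by simp
next
  case (Cons x v)
  then consider "sublist w (\<phi> x)" | "sublist w (morph_app \<phi> v)"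
    | s r where "w = s @ r" "suffix s (\<phi> x)" "prefix r (morph_app \<phi> v)"
    by (auto simp: morph_app_Cons sublist_append)
  then show ?case
  proof cases
    case 1
    then have "length w \<le> image_length_bound \<phi>"
      using length_le_image_length_bound[of \<phi> x] sublist_length_le order_trans by blast
    then show ?thesis using Cons.prems(1)[of w "[]" "[]"] by simp
  next
    case 2
    obtain s u p where "w = s @ morph_app \<phi> u @ p" "sublist u v"
      "length s \<le> image_length_bound \<phi>" "length p \<le> image_length_bound \<phi>"
      using Cons.IH[OF _ 2] by blast
    then show ?thesis using Cons.prems(1)[of s u p] by (simp add: sublist_Cons_right)
  next
    case 3
    obtain u p where "r = morph_app \<phi> u @ p" "prefix u v" "length p \<le> image_length_bound \<phi>"
      using prefix_morph_app_decomp[OF 3(3)] by blast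
    moreover have "length s \<le> image_length_bound \<phi>"
      using 3(2) length_le_image_length_bound[of \<phi> x] suffix_length_le order_trans by blast
    ultimately show ?thesis
      using Cons.prems(1)[of s u p] 3(1) by (meson prefix_imp_sublist sublist_Cons_right)
  qed
qed

section \<open>Weights of factors\<close>

definition weight :: "('a \<Rightarrow> real) \<Rightarrow> 'a list \<Rightarrow> real" where
  "weight \<beta> w = sum_list (map \<beta> w)"

lemma weight_Nil [simp]: "weight \<beta> [] = 0"
  by (simp add: weight_def)

lemma weight_append [simp]: "weight \<beta> (u @ v) = weight \<beta> u + weight \<beta> v"
  by (simp add: weight_def)

lemma weight_morph_pow_ge:
  assumes "\<And>x. - K \<le> weight \<beta> (morph_pow \<phi> j [x])"
  shows "- (real (length t) * K) \<le> weight \<beta> (morph_pow \<phi> j t)"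
proof (induction t)
  case (Cons x t)
  then show ?case
    using assms[of x] by (simp add: morph_pow_Cons[of \<phi> j x t] algebra_simps)
qed simp

lemma sum_atLeastLessThan_split_first:
  fixes K :: "nat \<Rightarrow> real"
  assumes "\<And>i. J \<le> i \<Longrightarrow> K i = 0"
  shows "(\<Sum>i\<in>{j..<J}. K i) = K j + (\<Sum>i\<in>{Suc j..<J}. K i)"
  using assms by (cases "j < J") (simp_all add: sum.atLeast_Suc_lessThan)

text \<open>Each desubstitution step leaves at most \<open>2 * image_length_bound \<phi>\<close> letters at the current level
  \<open>i\<close>, and the last step one more; only the levels \<open>i < J\<close> can contribute negative weight.\<close>

lemma weight_morph_pow_factor_ge:
  fixes K :: "nat \<Rightarrow> real"
  assumes K_nonneg: "\<And>i. 0 \<le> K i" and K_vanish: "\<And>i. J \<le> i \<Longrightarrow> K i = 0"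
    and letter_ge: "\<And>i x. - K i \<le> weight \<beta> (morph_pow \<phi> i [x])"
    and "sublist u (morph_pow \<phi> n [a])"
  shows "- ((2 * real (image_length_bound \<phi>) + 1) * (\<Sum>i\<in>{j..<J}. K i))
           \<le> weight \<beta> (morph_pow \<phi> j u)"
  using assms(4)
proof (induction n arbitrary: u j)
  let ?L = "real (image_length_bound \<phi>)"
  have tail_nonneg: "0 \<le> (\<Sum>i\<in>{Suc j..<J}. K i)" for j
    using K_nonneg by (simp add: sum_nonneg)
  {
    case 0
    then have "length u \<le> 1" using sublist_length_le by fastforce
    then have "real (length u) * K j \<le> K j"
      using K_nonneg by (simp add: mult_left_le_one_le)
    moreover have "K j \<le> (2 * ?L + 1) * (\<Sum>i\<in>{j..<J}. K i)"
      using sum_atLeastLessThan_split_first[of J K j, OF K_vanish] tail_nonneg[of j] K_nonneg[of j]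
      by (simp add: algebra_simps add_increasing mult_nonneg_nonneg)
    ultimately show ?case using weight_morph_pow_ge[of "K j" \<beta> \<phi> j u, OF letter_ge] by linarith
  next
    case (Suc n)
    then have "sublist u (morph_app \<phi> (morph_pow \<phi> n [a]))" by (simp add: morph_pow_Suc)
    then obtain s v p where decomp: "u = s @ morph_app \<phi> v @ p" "sublist v (morph_pow \<phi> n [a])"
      "length s \<le> image_length_bound \<phi>" "length p \<le> image_length_bound \<phi>"
      by (rule sublist_morph_app_decomp)
    have border: "- (?L * K j) \<le> weight \<beta> (morph_pow \<phi> j t)"
      if "length t \<le> image_length_bound \<phi>" for t
      using weight_morph_pow_ge[of "K j" \<beta> \<phi> j t, OF letter_ge] mult_right_mono[OF _ K_nonneg[of j], of "real (length t)" ?L] that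
      by simp
    have "weight \<beta> (morph_pow \<phi> j u) = weight \<beta> (morph_pow \<phi> j s)
        + weight \<beta> (morph_pow \<phi> (Suc j) v) + weight \<beta> (morph_pow \<phi> j p)"
      by (simp add: decomp(1) morph_pow_Suc')
    then show ?case
      using Suc.IH[OF decomp(2), of "Suc j"] border[OF decomp(3)] border[OF decomp(4)]
        sum_atLeastLessThan_split_first[of J K j, OF K_vanish] K_nonneg[of j]
      by (simp add: algebra_simps)
  }
qed

lemma weight_lang_bounded_below:
  fixes \<phi> :: "'a::finite \<Rightarrow> 'a list"
  assumes "eventually (\<lambda>j. \<forall>b. 0 \<le> weight \<beta> (morph_pow \<phi> j [b])) sequentially"
  obtains C where "\<And>w. w \<in> lang \<phi> \<Longrightarrow> - C \<le> weight \<beta> w"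
proof -
  obtain J where J: "\<And>j b. J \<le> j \<Longrightarrow> 0 \<le> weight \<beta> (morph_pow \<phi> j [b])"
    using assms unfolding eventually_sequentially by blast
  define K where "K i = (\<Sum>b\<in>UNIV. max 0 (- weight \<beta> (morph_pow \<phi> i [b])))" for i
  have K_nonneg: "0 \<le> K i" for i
    unfolding K_def by (simp add: sum_nonneg)
  have K_vanish: "K i = 0" if "J \<le> i" for i
    unfolding K_def using J[OF that] by simp
  have letter_ge: "- K i \<le> weight \<beta> (morph_pow \<phi> i [x])" for i x
  proof -
    have "max 0 (- weight \<beta> (morph_pow \<phi> i [x])) \<le> K i"
      unfolding K_def by (rule member_le_sum) auto
    then show ?thesis by linarith
  qed
  show ?thesis
  proof
    fix w assume "w \<in> lang \<phi>"
    then obtain n a where "sublist w (morph_pow \<phi> n [a])" unfolding lang_def by blast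
    from weight_morph_pow_factor_ge[of K J, OF K_nonneg K_vanish letter_ge this, of 0]
    show "- ((2 * real (image_length_bound \<phi>) + 1) * (\<Sum>i\<in>{0..<J}. K i)) \<le> weight \<beta> w"
      by simp
  qed
qed

section \<open>Letter counts and the Perron eigenvector\<close>

lemma sum_list_map_eq_sum_count_list:
  fixes g :: "'a::finite \<Rightarrow> 'b::comm_semiring_1"
  shows "sum_list (map g w) = (\<Sum>c\<in>UNIV. of_nat (count_list w c) * g c)"
proof (induction w)
  case (Cons x w)
  have "(\<Sum>c\<in>UNIV. of_nat (count_list (x # w) c) * g c)
      = (\<Sum>c\<in>UNIV. of_nat (count_list w c) * g c + (if c = x then g c else 0))"
    by (rule sum.cong) (auto simp: algebra_simps)
  then show ?case using Cons by (simp add: sum.distrib add.commute)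
qed simp

lemma sum_count_list_eq_length: "(\<Sum>a\<in>UNIV. count_list w (a::'a::finite)) = length w"
  using sum_list_map_eq_sum_count_list[of "\<lambda>_. 1::nat" w] by (simp add: sum_list_triv)

lemma weight_eq_sum_count_list: "weight \<beta> w = (\<Sum>a\<in>UNIV. \<beta> a * real (count_list w (a::'a::finite)))"
  by (simp add: weight_def sum_list_map_eq_sum_count_list mult.commute)

definition incidence_pow :: "('a \<Rightarrow> 'a list) \<Rightarrow> nat \<Rightarrow> 'a \<Rightarrow> 'a \<Rightarrow> real" where
  "incidence_pow \<phi> n a c = real (count_list (morph_pow \<phi> n [c]) a)"

lemma incidence_pow_Suc_0: "incidence_pow \<phi> (Suc 0) a c = real (incidence \<phi> a c)"
  by (simp add: incidence_pow_def incidence_def morph_pow_Suc)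

lemma count_list_morph_pow:
  fixes \<phi> :: "'a::finite \<Rightarrow> 'a list"
  shows "real (count_list (morph_pow \<phi> k w) a)
    = (\<Sum>c\<in>UNIV. real (count_list w c) * incidence_pow \<phi> k a c)"
proof -
  have "real (count_list (morph_pow \<phi> k w) a) = sum_list (map (incidence_pow \<phi> k a) w)"
  proof (induction w)
    case (Cons x w)
    then show ?case by (simp add: incidence_pow_def morph_pow_Cons[of \<phi> k x w])
  qed simp
  then show ?thesis by (simp add: sum_list_map_eq_sum_count_list)
qed

lemma incidence_pow_add:
  fixes \<phi> :: "'a::finite \<Rightarrow> 'a list"
  shows "incidence_pow \<phi> (m + n) a c = (\<Sum>d\<in>UNIV. incidence_pow \<phi> m a d * incidence_pow \<phi> n d c)"
  using count_list_morph_pow[of \<phi> m "morph_pow \<phi> n [c]" a]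
  by (simp add: incidence_pow_def morph_pow_add mult.commute)

lemma incidence_pow_eigen:
  fixes \<phi> :: "'a::finite \<Rightarrow> 'a list"
  assumes eigen: "\<And>a. (\<Sum>b\<in>UNIV. real (incidence \<phi> a b) * \<mu> b) = r * \<mu> a"
  shows "(\<Sum>c\<in>UNIV. incidence_pow \<phi> n a c * \<mu> c) = r ^ n * \<mu> a"
proof (induction n arbitrary: a)
  case 0
  have "(\<Sum>c\<in>UNIV. incidence_pow \<phi> 0 a c * \<mu> c) = (\<Sum>c\<in>UNIV. if c = a then \<mu> c else 0)"
    by (rule sum.cong) (auto simp: incidence_pow_def)
  then show ?case by simp
next
  case (Suc n)
  have "(\<Sum>c\<in>UNIV. incidence_pow \<phi> (Suc n) a c * \<mu> c)
      = (\<Sum>c\<in>UNIV. \<Sum>d\<in>UNIV. incidence_pow \<phi> n a d * (real (incidence \<phi> d c) * \<mu> c))"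
    using incidence_pow_add[of \<phi> n "Suc 0" a]
    by (simp add: incidence_pow_Suc_0 sum_distrib_left mult_ac)
  also have "\<dots> = (\<Sum>d\<in>UNIV. incidence_pow \<phi> n a d * (\<Sum>c\<in>UNIV. real (incidence \<phi> d c) * \<mu> c))"
    by (subst sum.swap) (simp only: sum_distrib_left)
  also have "\<dots> = r * (\<Sum>d\<in>UNIV. incidence_pow \<phi> n a d * \<mu> d)"
    by (simp add: eigen sum_distrib_left mult.left_commute)
  finally show ?case using Suc by simp
qed

locale positive_eigenvector =
  fixes P :: "'a::finite \<Rightarrow> 'a \<Rightarrow> real" and \<mu> :: "'a \<Rightarrow> real" and \<rho> :: real
  assumes entry_ge_one: "\<And>a b. 1 \<le> P a b"
    and positive: "\<And>a. 0 < \<mu> a"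
    and sum_eq_one: "(\<Sum>a\<in>UNIV. \<mu> a) = 1"
    and eigen: "\<And>a. (\<Sum>b\<in>UNIV. P a b * \<mu> b) = \<rho> * \<mu> a"
begin

lemma le_one: "\<mu> a \<le> 1"
  using member_le_sum[of a UNIV \<mu>] positive sum_eq_one by (simp add: less_imp_le)

lemma sum_le_row_sum:
  assumes "\<And>b. 0 \<le> x b"
  shows "(\<Sum>b\<in>UNIV. x b) \<le> (\<Sum>b\<in>UNIV. P a b * x b)"
  by (rule sum_mono) (use assms entry_ge_one mult_right_mono[of 1 "P a _" "x _"] in auto)

lemma eigenvalue_ge_one: "1 \<le> \<rho>"
proof -
  fix a
  have one_le: "1 \<le> \<rho> * \<mu> a"
    using sum_le_row_sum[of \<mu> a] positive by (simp add: eigen sum_eq_one less_imp_le)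
  then have "0 < \<rho>"
    using positive[of a] by (smt (verit) mult_nonpos_nonneg)
  then have "\<rho> * \<mu> a \<le> \<rho>"
    using mult_left_mono[OF le_one[of a], of \<rho>] by simp
  with one_le show ?thesis by linarith
qed

lemma le_multiple:
  obtains h where "\<And>a. x a \<le> h * \<mu> a"
proof
  fix a
  have "\<bar>x a\<bar> / \<mu> a \<le> (\<Sum>b\<in>UNIV. \<bar>x b\<bar> / \<mu> b)"
    by (rule member_le_sum) (auto intro: divide_nonneg_pos positive)
  then have "\<bar>x a\<bar> \<le> (\<Sum>b\<in>UNIV. \<bar>x b\<bar> / \<mu> b) * \<mu> a"
    using positive[of a] by (simp add: pos_divide_le_eq)
  then show "x a \<le> (\<Sum>b\<in>UNIV. \<bar>x b\<bar> / \<mu> b) * \<mu> a" by linarith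
qed

lemma sandwich_lower:
  assumes lower: "\<And>b. l * \<mu> b \<le> x b"
  shows "(l + (sum x UNIV - l) / \<rho>) * \<mu> a \<le> (\<Sum>b\<in>UNIV. P a b * x b) / \<rho>"
proof -
  define y where "y b = x b - l * \<mu> b" for b
  have y_nonneg: "0 \<le> y b" for b using lower by (simp add: y_def)
  have sum_y: "sum y UNIV = sum x UNIV - l"
    by (simp add: y_def sum_subtractf sum_distrib_left[symmetric] sum_eq_one)
  have "(\<Sum>b\<in>UNIV. P a b * y b) = (\<Sum>b\<in>UNIV. P a b * x b) - l * (\<Sum>b\<in>UNIV. P a b * \<mu> b)"
    by (simp add: y_def right_diff_distrib sum_subtractf sum_distrib_left mult.left_commute)
  moreover have "sum y UNIV * \<mu> a \<le> sum y UNIV"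
    using sum_nonneg[of UNIV y] y_nonneg le_one[of a] by (simp add: mult_left_le)
  ultimately have "l * (\<rho> * \<mu> a) + sum y UNIV * \<mu> a \<le> (\<Sum>b\<in>UNIV. P a b * x b)"
    using sum_le_row_sum[of y a, OF y_nonneg] by (simp add: eigen)
  moreover have "(l + (sum x UNIV - l) / \<rho>) * \<mu> a = (l * (\<rho> * \<mu> a) + sum y UNIV * \<mu> a) / \<rho>"
    using eigenvalue_ge_one by (simp add: sum_y field_simps)
  ultimately show ?thesis
    using eigenvalue_ge_one by (simp add: divide_right_mono)
qed

lemma sandwich_upper:
  assumes "\<And>b. x b \<le> h * \<mu> b"
  shows "(\<Sum>b\<in>UNIV. P a b * x b) / \<rho> \<le> (h - (h - sum x UNIV) / \<rho>) * \<mu> a"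
proof -
  have "(- h + (sum (\<lambda>b. - x b) UNIV - - h) / \<rho>) * \<mu> a \<le> (\<Sum>b\<in>UNIV. P a b * - x b) / \<rho>"
    by (rule sandwich_lower) (use assms in simp)
  then show ?thesis by (simp add: sum_negf algebra_simps)
qed

text \<open>A contraction in the positive cone: each step shrinks the gap between the two
  multiples of \<open>\<mu>\<close> enclosing \<open>u n\<close> by the factor \<open>1 - 1/\<rho>\<close>.\<close>

lemma sandwich_iterate:
  assumes step: "\<And>n a. u (Suc n) a = (\<Sum>b\<in>UNIV. P a b * u n b) / \<rho>"
    and init: "\<And>a. l0 * \<mu> a \<le> u 0 a" "\<And>a. u 0 a \<le> h0 * \<mu> a"
  shows "\<exists>l h. l0 \<le> l \<and> h - l \<le> (1 - 1 / \<rho>) ^ n * (h0 - l0)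
           \<and> (\<forall>a. l * \<mu> a \<le> u n a \<and> u n a \<le> h * \<mu> a)"
proof (induction n)
  case 0
  show ?case using init by auto
next
  case (Suc n)
  then obtain l h where IH: "l0 \<le> l" "h - l \<le> (1 - 1 / \<rho>) ^ n * (h0 - l0)"
    "\<And>a. l * \<mu> a \<le> u n a" "\<And>a. u n a \<le> h * \<mu> a" by blast
  define s where "s = sum (u n) UNIV"
  have "l \<le> s"
    using sum_mono[of UNIV "\<lambda>a. l * \<mu> a" "u n"] IH(3)
    by (simp add: s_def sum_distrib_left[symmetric] sum_eq_one)
  have "0 \<le> 1 - 1 / \<rho>" using eigenvalue_ge_one by simp
  define l' where "l' = l + (s - l) / \<rho>"
  define h' where "h' = h - (h - s) / \<rho>"
  have "h' - l' = (1 - 1 / \<rho>) * (h - l)"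
    using eigenvalue_ge_one by (simp add: l'_def h'_def field_simps)
  also have "\<dots> \<le> (1 - 1 / \<rho>) ^ Suc n * (h0 - l0)"
    using IH(2) \<open>0 \<le> 1 - 1 / \<rho>\<close> by (simp add: mult_left_mono mult.assoc)
  finally have "h' - l' \<le> (1 - 1 / \<rho>) ^ Suc n * (h0 - l0)" .
  moreover have "0 \<le> (s - l) / \<rho>"
    using \<open>l \<le> s\<close> eigenvalue_ge_one by simp
  then have "l0 \<le> l'"
    using IH(1) by (simp add: l'_def)
  moreover have "l' * \<mu> a \<le> u (Suc n) a" "u (Suc n) a \<le> h' * \<mu> a" for a
    using sandwich_lower[OF IH(3)] sandwich_upper[OF IH(4)] by (simp_all add: step l'_def h'_def s_def)
  ultimately show ?case by blast
qed

lemma weighted_sum_ge: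
  assumes "\<And>a. l * \<mu> a \<le> x a" "\<And>a. x a \<le> h * \<mu> a"
  shows "l * (\<Sum>a\<in>UNIV. \<beta> a * \<mu> a) - (h - l) * (\<Sum>a\<in>UNIV. \<bar>\<beta> a\<bar> * \<mu> a)
           \<le> (\<Sum>a\<in>UNIV. \<beta> a * x a)"
proof -
  have "(\<Sum>a\<in>UNIV. l * (\<beta> a * \<mu> a) - (h - l) * (\<bar>\<beta> a\<bar> * \<mu> a)) \<le> (\<Sum>a\<in>UNIV. \<beta> a * x a)"
  proof (rule sum_mono)
    fix a
    have gap: "0 \<le> x a - l * \<mu> a" "x a - l * \<mu> a \<le> (h - l) * \<mu> a"
      using assms[of a] by (simp_all add: algebra_simps)
    have "\<bar>\<beta> a * (x a - l * \<mu> a)\<bar> \<le> \<bar>\<beta> a\<bar> * ((h - l) * \<mu> a)"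
      using gap by (simp add: abs_mult mult_left_mono)
    then have "- (\<bar>\<beta> a\<bar> * ((h - l) * \<mu> a)) \<le> \<beta> a * (x a - l * \<mu> a)"
      by (simp add: abs_le_iff)
    then show "l * (\<beta> a * \<mu> a) - (h - l) * (\<bar>\<beta> a\<bar> * \<mu> a) \<le> \<beta> a * x a"
      by (simp add: algebra_simps)
  qed
  then show ?thesis by (simp add: sum_subtractf sum_distrib_left)
qed

lemma eventually_weighted_sum_nonneg:
  assumes step: "\<And>n a. u (Suc n) a = (\<Sum>b\<in>UNIV. P a b * u n b) / \<rho>"
    and u0_nonneg: "\<And>a. 0 \<le> u 0 a" and u0_sum: "0 < sum (u 0) UNIV"
    and drift_pos: "0 < (\<Sum>a\<in>UNIV. \<beta> a * \<mu> a)"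
  shows "eventually (\<lambda>n. 0 \<le> (\<Sum>a\<in>UNIV. \<beta> a * u n a)) sequentially"
proof -
  define c where "c = sum (u 0) UNIV / \<rho>"
  define B where "B = (\<Sum>a\<in>UNIV. \<bar>\<beta> a\<bar> * \<mu> a)"
  have "0 < c" using u0_sum eigenvalue_ge_one by (simp add: c_def)
  have "0 \<le> B" unfolding B_def using positive by (simp add: sum_nonneg less_imp_le)
  obtain H where "\<And>a. u 1 a \<le> H * \<mu> a" using le_multiple[of "u 1"] by blast
  moreover have "c * \<mu> a \<le> u 1 a" for a
    using sandwich_lower[of 0 "u 0" a] u0_nonneg by (simp add: step c_def)
  ultimately have sandwiched: "\<exists>l h. c \<le> l \<and> h - l \<le> (1 - 1 / \<rho>) ^ n * (H - c)
      \<and> (\<forall>a. l * \<mu> a \<le> u (Suc n) a \<and> u (Suc n) a \<le> h * \<mu> a)" for n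
    using sandwich_iterate[of "\<lambda>n. u (Suc n)"] step by simp
  have "((\<lambda>n. (1 - 1 / \<rho>) ^ n * (H - c) * B) \<longlongrightarrow> 0) sequentially"
    using eigenvalue_ge_one by (intro tendsto_mult_left_zero LIMSEQ_power_zero) auto
  then have "eventually (\<lambda>n. (1 - 1 / \<rho>) ^ n * (H - c) * B < c * (\<Sum>a\<in>UNIV. \<beta> a * \<mu> a))
      sequentially"
    using \<open>0 < c\<close> drift_pos by (intro order_tendstoD(2)) auto
  then have "eventually (\<lambda>n. 0 \<le> (\<Sum>a\<in>UNIV. \<beta> a * u (Suc n) a)) sequentially"
  proof (rule eventually_mono)
    fix n
    assume small: "(1 - 1 / \<rho>) ^ n * (H - c) * B < c * (\<Sum>a\<in>UNIV. \<beta> a * \<mu> a)"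
    obtain l h where lh: "c \<le> l" "h - l \<le> (1 - 1 / \<rho>) ^ n * (H - c)"
      "\<And>a. l * \<mu> a \<le> u (Suc n) a" "\<And>a. u (Suc n) a \<le> h * \<mu> a"
      using sandwiched[of n] by blast
    have "(h - l) * B < l * (\<Sum>a\<in>UNIV. \<beta> a * \<mu> a)"
      using small lh(1,2) drift_pos \<open>0 \<le> B\<close>
      by (smt (verit) mult_right_mono mult_right_mono_neg)
    then show "0 \<le> (\<Sum>a\<in>UNIV. \<beta> a * u (Suc n) a)"
      using weighted_sum_ge[of l "u (Suc n)" h \<beta>] lh(3,4) by (simp add: B_def)
  qed
  then show ?thesis
    using eventually_sequentially_Suc[of "\<lambda>n. 0 \<le> (\<Sum>a\<in>UNIV. \<beta> a * u n a)"] by simp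
qed

lemma eigenvector_compare:
  assumes "positive_eigenvector P \<mu>' \<rho>'"
  shows "\<rho>' \<le> \<rho>" and "\<rho>' = \<rho> \<Longrightarrow> \<mu>' = \<mu>"
proof -
  interpret other: positive_eigenvector P \<mu>' \<rho>' by fact
  define t where "t = Max (range (\<lambda>a. \<mu>' a / \<mu> a))"
  have "t \<in> range (\<lambda>a. \<mu>' a / \<mu> a)"
    unfolding t_def by (rule Max_in) auto
  then obtain a0 where a0: "t = \<mu>' a0 / \<mu> a0" by blast
  define z where "z b = t * \<mu> b - \<mu>' b" for b
  have z_nonneg: "0 \<le> z b" for b
  proof -
    have "\<mu>' b / \<mu> b \<le> t" unfolding t_def by (rule Max_ge) auto
    then show ?thesis using positive[of b] by (simp add: z_def pos_divide_le_eq)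
  qed
  have "(\<Sum>b\<in>UNIV. P a0 b * z b) = t * (\<Sum>b\<in>UNIV. P a0 b * \<mu> b) - (\<Sum>b\<in>UNIV. P a0 b * \<mu>' b)"
    by (simp add: z_def right_diff_distrib sum_subtractf sum_distrib_left mult.left_commute)
  also have "\<dots> = t * (\<rho> * \<mu> a0) - \<rho>' * \<mu>' a0"
    by (simp add: eigen other.eigen)
  also have "\<dots> = (\<rho> - \<rho>') * \<mu>' a0"
    using a0 positive[of a0] by (simp add: field_simps)
  finally have Pz: "(\<Sum>b\<in>UNIV. P a0 b * z b) = (\<rho> - \<rho>') * \<mu>' a0" .
  then show "\<rho>' \<le> \<rho>"
    using sum_le_row_sum[of z a0, OF z_nonneg] sum_nonneg[of UNIV z] z_nonneg other.positive[of a0]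
    by (smt (verit) mult_nonneg_nonneg zero_le_mult_iff)
  assume "\<rho>' = \<rho>"
  then have "sum z UNIV \<le> 0"
    using Pz sum_le_row_sum[of z a0, OF z_nonneg] by simp
  then have "z b = 0" for b
    using z_nonneg sum_nonneg_eq_0_iff[of UNIV z] by (simp add: order_antisym sum_nonneg)
  then have scaled: "\<mu>' b = t * \<mu> b" for b by (simp add: z_def)
  then have "t = 1"
    using other.sum_eq_one sum_eq_one by (simp add: sum_distrib_left[symmetric])
  then show "\<mu>' = \<mu>" using scaled by auto
qed

lemma eigenvector_unique:
  assumes "positive_eigenvector P \<mu>' \<rho>'"
  shows "\<mu>' = \<mu>"
proof -
  have "positive_eigenvector P \<mu> \<rho>" by unfold_locales
  then have "\<rho> \<le> \<rho>'" using positive_eigenvector.eigenvector_compare(1)[OF assms] by blast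
  then show ?thesis using eigenvector_compare[OF assms] by simp
qed

end

definition prob_simplex :: "(real ^ 'n) set" where
  "prob_simplex = {x. (\<forall>a. 0 \<le> x $ a) \<and> (\<Sum>a\<in>UNIV. x $ a) = 1}"

lemma compact_prob_simplex: "compact (prob_simplex :: (real ^ 'n) set)"
proof -
  have "closed (prob_simplex :: (real ^ 'n) set)"
    unfolding prob_simplex_def
    by (intro closed_Collect_conj closed_Collect_all closed_Collect_le closed_Collect_eq
        continuous_intros continuous_on_component)
  moreover have "prob_simplex \<subseteq> cball (0 :: real ^ 'n) 1"
  proof
    fix x :: "real ^ 'n" assume "x \<in> prob_simplex"
    then have "norm x \<le> 1" using norm_le_l1_cart[of x] by (simp add: prob_simplex_def)
    then show "x \<in> cball 0 1" by simp
  qed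
  ultimately show ?thesis
    using bounded_cball bounded_subset compact_eq_bounded_closed by blast
qed

lemma convex_prob_simplex: "convex (prob_simplex :: (real ^ 'n) set)"
  unfolding convex_def prob_simplex_def by (auto simp: sum.distrib sum_distrib_left[symmetric])

lemma prob_simplex_nonempty: "(prob_simplex :: (real ^ 'n) set) \<noteq> {}"
proof -
  have "(\<chi> a. 1 / real CARD('n)) \<in> (prob_simplex :: (real ^ 'n) set)"
    by (simp add: prob_simplex_def)
  then show ?thesis by blast
qed

text \<open>Brouwer's fixed point theorem applied to \<open>x \<mapsto> M x / |M x|\<^sub>1\<close> on the simplex.\<close>

lemma nonneg_eigenvector_exists:
  fixes M :: "'a::finite \<Rightarrow> 'a \<Rightarrow> real"
  assumes nonneg: "\<And>a b. 0 \<le> M a b" and column_sum: "\<And>b. 1 \<le> (\<Sum>a\<in>UNIV. M a b)"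
  obtains \<mu> r where "\<And>a. 0 \<le> \<mu> a" "(\<Sum>a\<in>UNIV. \<mu> a) = 1"
    "\<And>a. (\<Sum>b\<in>UNIV. M a b * \<mu> b) = r * \<mu> a"
proof -
  define D where "D x = (\<Sum>a\<in>UNIV. \<Sum>b\<in>UNIV. M a b * x $ b)" for x :: "real ^ 'a"
  define f where "f x = (\<chi> a. (\<Sum>b\<in>UNIV. M a b * x $ b) / D x)" for x :: "real ^ 'a"
  have D_ge: "1 \<le> D x" if "x \<in> prob_simplex" for x
  proof -
    have "(\<Sum>b\<in>UNIV. x $ b) \<le> (\<Sum>b\<in>UNIV. (\<Sum>a\<in>UNIV. M a b) * x $ b)"
      using that column_sum mult_right_mono[of 1 "\<Sum>a\<in>UNIV. M a _" "x $ _"]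
      by (intro sum_mono) (auto simp: prob_simplex_def)
    also have "\<dots> = D x"
      unfolding D_def by (subst sum.swap) (simp add: sum_distrib_right)
    finally show ?thesis using that by (simp add: prob_simplex_def)
  qed
  have "continuous_on prob_simplex f"
    unfolding f_def D_def
    by (intro continuous_intros continuous_on_component) (use D_ge in \<open>fastforce simp: D_def\<close>)
  moreover have "f \<in> prob_simplex \<rightarrow> prob_simplex"
  proof
    fix x :: "real ^ 'a" assume x: "x \<in> prob_simplex"
    then have "0 < D x" using D_ge by force
    moreover have "0 \<le> (\<Sum>b\<in>UNIV. M a b * x $ b)" for a
      using x nonneg by (auto simp: prob_simplex_def intro!: sum_nonneg)
    ultimately show "f x \<in> prob_simplex"
      by (simp add: prob_simplex_def f_def sum_divide_distrib[symmetric] D_def)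
  qed
  ultimately obtain x where x: "x \<in> prob_simplex" "f x = x"
    using brouwer[OF compact_prob_simplex convex_prob_simplex prob_simplex_nonempty] by blast
  have "(\<Sum>b\<in>UNIV. M a b * x $ b) = D x * x $ a" for a
  proof -
    have "x $ a = (\<Sum>b\<in>UNIV. M a b * x $ b) / D x"
      using x(2) unfolding f_def by (metis vec_lambda_beta)
    then show ?thesis using D_ge[OF x(1)] by (simp add: field_simps)
  qed
  then show ?thesis
    using x(1) that[of "\<lambda>a. x $ a"] by (auto simp: prob_simplex_def)
qed

lemma primitive_incidence_pow_ge_one:
  assumes "\<And>a b. b \<in> set (morph_pow \<phi> k [a])"
  shows "1 \<le> incidence_pow \<phi> k a c"
proof -
  have "a \<in> set (morph_pow \<phi> k [c])" by (rule assms)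
  then have "count_list (morph_pow \<phi> k [c]) a \<noteq> 0" by (simp add: count_list_0_iff)
  then show ?thesis by (simp add: incidence_pow_def)
qed

lemma is_PF_freq_positive_eigenvector:
  fixes \<phi> :: "'a::finite \<Rightarrow> 'a list"
  assumes full: "\<And>a b. b \<in> set (morph_pow \<phi> k [a])" and "is_PF_freq \<phi> \<mu>"
  obtains r where "positive_eigenvector (incidence_pow \<phi> k) \<mu> (r ^ k)"
proof -
  obtain r where "\<And>a. 0 < \<mu> a" "(\<Sum>a\<in>UNIV. \<mu> a) = 1"
    and eigen: "\<And>a. (\<Sum>b\<in>UNIV. real (incidence \<phi> a b) * \<mu> b) = r * \<mu> a"
    using assms(2) unfolding is_PF_freq_def by blast
  then have "positive_eigenvector (incidence_pow \<phi> k) \<mu> (r ^ k)"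
    by unfold_locales
      (use primitive_incidence_pow_ge_one[OF full] incidence_pow_eigen[OF eigen] in auto)
  then show ?thesis by (rule that)
qed

lemma primitive_is_PF_freq:
  fixes \<phi> :: "'a::finite \<Rightarrow> 'a list"
  assumes "primitive \<phi>"
  shows "is_PF_freq \<phi> (freq \<phi>)"
proof -
  obtain k where full: "\<And>a b. b \<in> set (morph_pow \<phi> k [a])"
    using assms unfolding primitive_def by blast
  have column_sum: "1 \<le> (\<Sum>a\<in>UNIV. real (incidence \<phi> a b))" for b
  proof -
    have "(\<Sum>a\<in>UNIV. real (incidence \<phi> a b)) = real (length (\<phi> b))"
      by (simp add: incidence_def flip: sum_count_list_eq_length)
    then show ?thesis using primitive_nonerasing[OF assms, of b] by (cases "\<phi> b") auto
  qed
  obtain \<mu> r where \<mu>: "\<And>a. 0 \<le> \<mu> a" "(\<Sum>a\<in>UNIV. \<mu> a) = 1"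
    and eigen: "\<And>a. (\<Sum>b\<in>UNIV. real (incidence \<phi> a b) * \<mu> b) = r * \<mu> a"
    by (rule nonneg_eigenvector_exists[of "\<lambda>a b. real (incidence \<phi> a b)"]) (use column_sum in auto)
  have "0 < \<mu> a" for a
  proof -
    have "1 \<le> r ^ k * \<mu> a"
      using sum_mono[of UNIV \<mu> "\<lambda>c. incidence_pow \<phi> k a c * \<mu> c"]
        mult_right_mono[OF primitive_incidence_pow_ge_one[OF full] \<mu>(1)]
      by (simp add: \<mu>(2) incidence_pow_eigen[OF eigen])
    then show ?thesis using \<mu>(1)[of a] by (cases "\<mu> a = 0") auto
  qed
  then have PF: "is_PF_freq \<phi> \<mu>"
    unfolding is_PF_freq_def using \<mu>(2) eigen by blast
  obtain \<rho> where "positive_eigenvector (incidence_pow \<phi> k) \<mu> \<rho>"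
    using is_PF_freq_positive_eigenvector[OF full PF] by blast
  have unique: "\<mu>' = \<mu>" if "is_PF_freq \<phi> \<mu>'" for \<mu>'
    using is_PF_freq_positive_eigenvector[OF full that]
      positive_eigenvector.eigenvector_unique[OF \<open>positive_eigenvector _ \<mu> \<rho>\<close>] by metis
  have "freq \<phi> = \<mu>"
    unfolding freq_def using PF unique by (rule the_equality)
  then show ?thesis using PF by simp
qed

section \<open>Eventual positivity of letter weights\<close>

lemma eventually_sequentially_residues:
  assumes "0 < k" and "\<And>i. i < k \<Longrightarrow> eventually (\<lambda>n. P (k * n + i)) sequentially"
  shows "eventually P sequentially"
proof -
  have "eventually (\<lambda>n. \<forall>i\<in>{..<k}. P (k * n + i)) sequentially"
    using assms(2) by (intro eventually_ball_finite) auto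
  then obtain N where N: "\<And>n i. N \<le> n \<Longrightarrow> i < k \<Longrightarrow> P (k * n + i)"
    unfolding eventually_sequentially by blast
  show ?thesis
    unfolding eventually_sequentially
  proof (intro exI allI impI)
    fix j assume "k * N \<le> j"
    then have "N \<le> j div k" using assms(1) by (simp add: less_eq_div_iff_mult_less_eq mult.commute)
    then show "P j" using N[of "j div k" "j mod k"] assms(1) by simp
  qed
qed

text \<open>Along each residue class \<open>j = k n + i\<close>, the letter counts of \<open>\<phi>\<^sup>j(b)\<close> divided by
  \<open>\<rho>\<^sup>n\<close> evolve by the positive matrix of \<open>\<phi>\<^sup>k\<close>, which has Perron eigenvalue \<open>\<rho>\<close>.\<close>

lemma eventually_letter_weight_nonneg:
  fixes \<phi> :: "'a::finite \<Rightarrow> 'a list"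
  assumes prim: "primitive \<phi>" and drift_pos: "0 < (\<Sum>a\<in>UNIV. \<beta> a * freq \<phi> a)"
  shows "eventually (\<lambda>j. \<forall>b. 0 \<le> weight \<beta> (morph_pow \<phi> j [b])) sequentially"
proof (intro eventually_all_finite)
  fix b
  obtain k where "1 \<le> k" and full: "\<And>a b. b \<in> set (morph_pow \<phi> k [a])"
    using prim unfolding primitive_def by blast
  obtain r where "positive_eigenvector (incidence_pow \<phi> k) (freq \<phi>) (r ^ k)"
    using is_PF_freq_positive_eigenvector[OF full primitive_is_PF_freq[OF prim]] by blast
  then interpret positive_eigenvector "incidence_pow \<phi> k" "freq \<phi>" "r ^ k" .
  show "eventually (\<lambda>j. 0 \<le> weight \<beta> (morph_pow \<phi> j [b])) sequentially"
  proof (rule eventually_sequentially_residues)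
    fix i
    define u where "u n a = incidence_pow \<phi> (k * n + i) a b / (r ^ k) ^ n" for n a
    have "u (Suc n) a = (\<Sum>c\<in>UNIV. incidence_pow \<phi> k a c * u n c) / r ^ k" for n a
      using incidence_pow_add[of \<phi> k "k * n + i" a b]
      by (simp add: u_def add.assoc sum_divide_distrib[symmetric] field_simps)
    moreover have "sum (u 0) UNIV = real (length (morph_pow \<phi> i [b]))"
      by (simp add: u_def incidence_pow_def flip: sum_count_list_eq_length)
    then have "0 < sum (u 0) UNIV"
      using morph_pow_nonempty[of \<phi> "[b]" i] primitive_nonerasing[OF prim] by simp
    ultimately have "eventually (\<lambda>n. 0 \<le> (\<Sum>a\<in>UNIV. \<beta> a * u n a)) sequentially"
      using drift_pos
      by (intro eventually_weighted_sum_nonneg) (auto simp: u_def incidence_pow_def)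
    moreover have "r \<noteq> 0"
      using eigenvalue_ge_one \<open>1 \<le> k\<close> by (cases "r = 0") (simp_all add: power_0_left)
    then have "weight \<beta> (morph_pow \<phi> (k * n + i) [b]) = (r ^ k) ^ n * (\<Sum>a\<in>UNIV. \<beta> a * u n a)" for n
      by (simp add: u_def weight_eq_sum_count_list incidence_pow_def sum_distrib_left)
    ultimately show "eventually (\<lambda>n. 0 \<le> weight \<beta> (morph_pow \<phi> (k * n + i) [b])) sequentially"
      using eigenvalue_ge_one by (auto elim: eventually_mono)
  qed (use \<open>1 \<le> k\<close> in simp)
qed

section \<open>Avoiding the image of the language\<close>

lemma infinite_outside_half_plane:
  fixes X :: "(int \<times> int) set" and d1 d2 :: real
  assumes "(d1, d2) \<noteq> (0, 0)" and half_plane: "\<And>x y. (x, y) \<in> X \<Longrightarrow> - C \<le> d1 * x + d2 * y"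
  shows "infinite (UNIV - X)"
proof -
  obtain e1 e2 :: int where descent: "d1 * e1 + d2 * e2 < 0"
  proof (cases "d1 = 0")
    case True
    with assms(1) have "d2 * (- sgn d2) < 0" by (simp add: sgn_real_def)
    then show ?thesis using that[of 0 "- \<lfloor>sgn d2\<rfloor>"] True by (simp add: sgn_real_def)
  next
    case False
    then have "d1 * (- sgn d1) < 0" by (simp add: sgn_real_def)
    then show ?thesis using that[of "- \<lfloor>sgn d1\<rfloor>" 0] by (simp add: sgn_real_def)
  qed
  define g where "g n = (int n * e1, int n * e2)" for n :: nat
  have "inj g"
  proof
    fix m n assume "g m = g n"
    moreover have "e1 \<noteq> 0 \<or> e2 \<noteq> 0" using descent by auto
    ultimately show "m = n" by (auto simp: g_def)
  qed
  obtain N :: nat where N: "- C / (d1 * e1 + d2 * e2) < N" using reals_Archimedean2 by blast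
  have "g n \<notin> X" if "N \<le> n" for n
  proof
    assume "g n \<in> X"
    then have "- C \<le> real n * (d1 * e1 + d2 * e2)"
      using half_plane[of "int n * e1" "int n * e2"] by (simp add: g_def algebra_simps)
    moreover have "real n * (d1 * e1 + d2 * e2) < - C"
      using N that descent by (smt (verit) divide_less_eq mult_right_mono_neg of_nat_le_iff)
    ultimately show False by simp
  qed
  then have "g ` {N..} \<subseteq> UNIV - X" by auto
  moreover have "infinite (g ` {N..})"
    using \<open>inj g\<close> by (simp add: finite_image_iff inj_on_subset infinite_Ici)
  ultimately show ?thesis using infinite_super by blast
qed

lemma weight_hom_word:
  "weight (\<lambda>a. d1 * real_of_int (fst (S a)) + d2 * real_of_int (snd (S a))) w
     = d1 * real_of_int (fst (hom_word S w)) + d2 * real_of_int (snd (hom_word S w))"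
  by (induction w) (auto simp: weight_def hom_word_def algebra_simps)

theorem proposition10:
  fixes \<phi> :: "'a::finite \<Rightarrow> 'a list" and S :: "'a \<Rightarrow> int \<times> int"
  assumes "primitive \<phi>"
    and "drift \<phi> S \<noteq> (0, 0)"
  shows "infinite (UNIV - hom_word S ` lang \<phi>)"
proof -
  obtain d1 d2 where drift: "drift \<phi> S = (d1, d2)" by fastforce
  define \<beta> where "\<beta> = (\<lambda>a. d1 * real_of_int (fst (S a)) + d2 * real_of_int (snd (S a)))"
  have "(\<Sum>a\<in>UNIV. \<beta> a * freq \<phi> a)
      = d1 * (\<Sum>a\<in>UNIV. freq \<phi> a * real_of_int (fst (S a)))
        + d2 * (\<Sum>a\<in>UNIV. freq \<phi> a * real_of_int (snd (S a)))"
    by (simp add: \<beta>_def sum.distrib sum_distrib_left algebra_simps)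
  also have "\<dots> = d1 * d1 + d2 * d2"
    using drift by (simp add: drift_def)
  also have "\<dots> > 0"
    using assms(2) drift by (simp add: sum_squares_gt_zero_iff)
  finally obtain C where C: "\<And>w. w \<in> lang \<phi> \<Longrightarrow> - C \<le> weight \<beta> w"
    using weight_lang_bounded_below eventually_letter_weight_nonneg[OF assms(1)] by blast
  show ?thesis
  proof (rule infinite_outside_half_plane)
    show "(d1, d2) \<noteq> (0, 0)" using assms(2) drift by simp
    fix x y assume "(x, y) \<in> hom_word S ` lang \<phi>"
    then obtain w where "w \<in> lang \<phi>" "hom_word S w = (x, y)" by auto
    then show "- C \<le> d1 * x + d2 * y" using C[of w] by (simp add: \<beta>_def weight_hom_word)
  qed
qed

end
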